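(* Let $r$ be a rule. Then: (1) for all terms $s,s',t$ with $s'\in\mathit{ins}(s)$ and $s\rightarrow_r t$, there exists a term $t'\in\mathit{ins}(t)$ with $s'\rightarrow_r t'$ (i.e. $\rightarrow_r$ and $\mathit{ins}$ are compatible); (2) for all goals $\bar s,\bar s',\bar t$ with $\bar s'\in\mathit{mg}(\bar s)$ and $\bar s\leadsto_r\bar t$, there exists a goal $\bar t'\in\mathit{mg}(\bar t)$ with $\bar s'\leadsto_r\bar t'$ (i.e. $\leadsto_r$ and $\mathit{mg}$ are compatible).
   Context: Fix a signature $\Sigma$, a countably infinite set $X$ of variables disjoint from $\Sigma$, and a fresh constant $\square\notin\Sigma\cup X$. Terms are elements of $T(\Sigma,X)$; goals are finite sequences $\langle s_1,\dots,s_n\rangle$ of terms. Substitutions $\theta$ (maps $X\to T(\Sigma,X)$ moving finitely many variables) act homomorphically on terms and elementwise on goals. A term/goal $t$ is an instance of $s$ (and $s$ is more general than $t$) if $t=s\theta$ for some substitution $\theta$. A renaming is a substitution bijective on $X$; a variant is an image under a renaming. $\mathit{mgu}(s,t)$ denotes a most general unifier. Positions $\mathit{Pos}(s)\subseteq\mathbb{N}^*$, subterms $s|_p$ and replacement $s[t]_p$ are as usual. A context is a term over $\Sigma\cup\{\square\}$ and $X$ containing at least one $\square$; $c[t]$ replaces all occurrences of $\square$ by $t$. A goal-context is a sequence $\langle s_1,\dots,s_i,\square,s_{i+1},\dots,s_n\rangle$ of terms with one hole; $\bar c[\bar t]$ replaces $\square$ by the elements of the goal $\bar t$. $\mathit{ins}(s)=\{c[t]\mid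 c \text{ a context}, t \text{ an instance of } s\}$ for terms $s$; $\mathit{mg}(\bar s)=\{\bar c[\bar t]\mid \bar c \text{ a goal-context}, \bar t \text{ a goal more general than } \bar s\}$ for goals $\bar s$. A rule is a pair $(u,\bar v)$ with $u$ a term and $\bar v$ a goal. $s\rightarrow_{(r,p)}t$ iff $r=(u,\langle v\rangle)$ (right-hand side of length one), $p\in\mathit{Pos}(s)$, $s|_p=u\sigma$ for a substitution $\sigma$, and $t=s[v\sigma]_p$; $\rightarrow_r=\bigcup_p\rightarrow_{(r,p)}$. For $\bar s=\langle s_1,\dots,s_n\rangle$ and $1\le i\le n$, $\bar s\leadsto_{(r,\langle i\rangle)}\bar t$ iff for some variant $(u',\langle v_1,\dots,v_m\rangle)$ of $r$ variable-disjoint from $\bar s$, $s_i$ and $u'$ unify, $\eta=\mathit{mgu}(s_i,u')$, and $\bar t=\langle s_1,\dots,s_{i-1},v_1,\dots,v_m,s_{i+1},\dots,s_n\rangle\eta$; $\leadsto_r=\bigcup_i\leadsto_{(r,\langle i\rangle)}$. *)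

theory Defs
  imports Main "HOL-Library.Countable"
begin

text \<open>Terms over function symbols 'f (each symbol usable with any arity) and variables 'v.\<close>
datatype ('f, 'v) "term" = Var 'v | Fun 'f "('f, 'v) term list"

type_synonym ('f, 'v) goal = "('f, 'v) term list"
type_synonym ('f, 'v) rule = "('f, 'v) term \<times> ('f, 'v) term list"

fun vars_term :: "('f, 'v) term \<Rightarrow> 'v set" where
  "vars_term (Var x) = {x}"
| "vars_term (Fun f ts) = (\<Union>t\<in>set ts. vars_term t)"

definition vars_goal :: "('f, 'v) goal \<Rightarrow> 'v set" where
  "vars_goal ss = (\<Union>s\<in>set ss. vars_term s)"

fun subst_apply :: "('f, 'v) term \<Rightarrow> ('v \<Rightarrow> ('f, 'v) term) \<Rightarrow> ('f, 'v) term"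
  (infixl "\<cdot>" 67) where
  "Var x \<cdot> \<sigma> = \<sigma> x"
| "Fun f ts \<cdot> \<sigma> = Fun f (map (\<lambda>t. t \<cdot> \<sigma>) ts)"

definition goal_subst :: "('f, 'v) goal \<Rightarrow> ('v \<Rightarrow> ('f, 'v) term) \<Rightarrow> ('f, 'v) goal" where
  "goal_subst ss \<sigma> = map (\<lambda>s. s \<cdot> \<sigma>) ss"

definition is_subst :: "('v \<Rightarrow> ('f, 'v) term) \<Rightarrow> bool" where
  "is_subst \<sigma> \<longleftrightarrow> finite {x. \<sigma> x \<noteq> Var x}"

definition is_renaming :: "('v \<Rightarrow> ('f, 'v) term) \<Rightarrow> bool" where
  "is_renaming \<rho> \<longleftrightarrow> is_subst \<rho> \<and> (\<exists>\<pi>. bij \<pi> \<and> (\<forall>x. \<rho> x = Var (\<pi> x)))"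

definition is_instance_term :: "('f, 'v) term \<Rightarrow> ('f, 'v) term \<Rightarrow> bool" where
  "is_instance_term t s \<longleftrightarrow> (\<exists>\<theta>. is_subst \<theta> \<and> t = s \<cdot> \<theta>)"

definition is_instance_goal :: "('f, 'v) goal \<Rightarrow> ('f, 'v) goal \<Rightarrow> bool" where
  "is_instance_goal ts ss \<longleftrightarrow> (\<exists>\<theta>. is_subst \<theta> \<and> ts = goal_subst ss \<theta>)"

definition is_mgu :: "('v \<Rightarrow> ('f, 'v) term) \<Rightarrow> ('f, 'v) term \<Rightarrow> ('f, 'v) term \<Rightarrow> bool" where
  "is_mgu \<eta> s t \<longleftrightarrow> is_subst \<eta> \<and> s \<cdot> \<eta> = t \<cdot> \<eta> \<and>
     (\<forall>\<theta>. is_subst \<theta> \<and> s \<cdot> \<theta> = t \<cdot> \<theta> \<longrightarrow>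
        (\<exists>\<delta>. is_subst \<delta> \<and> (\<forall>x. \<theta> x = \<eta> x \<cdot> \<delta>)))"

function poss :: "('f, 'v) term \<Rightarrow> nat list set" where
  "poss (Var x) = {[]}"
| "poss (Fun f ts) = {[]} \<union> (\<Union>(i, t) \<in> set (zip [0..<length ts] ts). (\<lambda>p. i # p) ` poss t)"
  by pat_completeness auto
termination
  by (relation "measure size") (auto dest!: set_zip_rightD intro: less_Suc_eq_le[THEN iffD2] size_list_estimation')

fun subt_at :: "('f, 'v) term \<Rightarrow> nat list \<Rightarrow> ('f, 'v) term" where
  "subt_at t [] = t"
| "subt_at (Fun f ts) (i # p) = subt_at (ts ! i) p"
| "subt_at (Var x) (i # p) = Var x"

fun replace_at :: "('f, 'v) term \<Rightarrow> nat list \<Rightarrow> ('f, 'v) term \<Rightarrow> ('f, 'v) term" where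
  "replace_at t [] s = s"
| "replace_at (Fun f ts) (i # p) s = Fun f (ts[i := replace_at (ts ! i) p s])"
| "replace_at (Var x) (i # p) s = Var x"

text \<open>Contexts: terms over the signature extended by the hole, with at least one hole.\<close>
datatype ('f, 'v) ctxt = Hole | CVar 'v | CFun 'f "('f, 'v) ctxt list"

fun has_hole :: "('f, 'v) ctxt \<Rightarrow> bool" where
  "has_hole Hole = True"
| "has_hole (CVar x) = False"
| "has_hole (CFun f cs) = (\<exists>c\<in>set cs. has_hole c)"

text \<open>Filling replaces all occurrences of the hole.\<close>
fun fill :: "('f, 'v) ctxt \<Rightarrow> ('f, 'v) term \<Rightarrow> ('f, 'v) term" where
  "fill Hole t = t"
| "fill (CVar x) t = Var x"
| "fill (CFun f cs) t = Fun f (map (\<lambda>c. fill c t) cs)"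

definition ins :: "('f, 'v) term \<Rightarrow> ('f, 'v) term set" where
  "ins s = {fill c t | c t. has_hole c \<and> is_instance_term t s}"

text \<open>A goal-context is a pair (prefix, suffix); filling inserts a goal at the hole.\<close>
definition mg :: "('f, 'v) goal \<Rightarrow> ('f, 'v) goal set" where
  "mg ss = {pre @ ts @ post | pre ts post. is_instance_goal ss ts}"

definition rstep_at :: "('f, 'v) rule \<Rightarrow> nat list \<Rightarrow> ('f, 'v) term \<Rightarrow> ('f, 'v) term \<Rightarrow> bool" where
  "rstep_at r p s t \<longleftrightarrow> (\<exists>u v \<sigma>. r = (u, [v]) \<and> p \<in> poss s \<and> is_subst \<sigma> \<and>
      subt_at s p = u \<cdot> \<sigma> \<and> t = replace_at s p (v \<cdot> \<sigma>))"

definition rstep :: "('f, 'v) rule \<Rightarrow> ('f, 'v) term \<Rightarrow> ('f, 'v) term \<Rightarrow> bool" where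
  "rstep r s t \<longleftrightarrow> (\<exists>p. rstep_at r p s t)"

text \<open>Narrowing step at (1-based) goal position i.\<close>
definition nstep_at :: "('f, 'v) rule \<Rightarrow> nat \<Rightarrow> ('f, 'v) goal \<Rightarrow> ('f, 'v) goal \<Rightarrow> bool" where
  "nstep_at r i ss ts \<longleftrightarrow> 1 \<le> i \<and> i \<le> length ss \<and>
     (\<exists>\<rho> \<eta>. is_renaming \<rho> \<and>
        (vars_term (fst r \<cdot> \<rho>) \<union> vars_goal (goal_subst (snd r) \<rho>)) \<inter> vars_goal ss = {} \<and>
        is_mgu \<eta> (ss ! (i - 1)) (fst r \<cdot> \<rho>) \<and>
        ts = goal_subst (take (i - 1) ss @ goal_subst (snd r) \<rho> @ drop i ss) \<eta>)"

definition nstep :: "('f, 'v) rule \<Rightarrow> ('f, 'v) goal \<Rightarrow> ('f, 'v) goal \<Rightarrow> bool" where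
  "nstep r ss ts \<longleftrightarrow> (\<exists>i. nstep_at r i ss ts)"

end

theory Submission
  imports Defs
begin

text \<open>
  Rewriting: a step of \<open>s\<close> at position \<open>p\<close> with matcher \<open>\<sigma>\<close> is a step of \<open>c[s\<theta>]\<close>
  at the position of a hole followed by \<open>p\<close>, with matcher \<open>\<sigma>\<theta>\<close>.

  Narrowing is the lifting lemma: let \<open>s' = pre @ t @ post\<close> with \<open>t\<delta> = s\<close>, and let
  \<open>s\<close> narrow at its \<open>i\<close>-th atom with a variant \<open>u\<rho>\<close> of the rule and mgu \<open>\<eta>\<close>.
  Rename the rule apart from \<open>s'\<close> instead, by \<open>\<rho>'\<close>. The substitution \<open>\<theta>\<close> that acts as
  \<open>\<delta>\<eta>\<close> on the variables of \<open>s'\<close> and maps \<open>u\<rho>'\<close> to \<open>u\<rho>\<eta>\<close> unifies \<open>t\<^sub>i\<close> with \<open>u\<rho>'\<close>,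
  so it factors as \<open>\<eta>'\<delta>'\<close> through their mgu \<open>\<eta>'\<close>. Narrowing \<open>s'\<close> at the corresponding
  atom with \<open>\<rho>'\<close> and \<open>\<eta>'\<close> then yields a goal whose middle part is mapped by \<open>\<delta>'\<close> onto the
  narrowed goal. Renaming apart needs infinitely many variables; mgus of unifiable terms
  exist by the usual variable-elimination argument.
\<close>

section \<open>Substitutions, positions and contexts\<close>

lemma subst_subst_compose: "t \<cdot> \<sigma> \<cdot> \<tau> = t \<cdot> (\<lambda>x. \<sigma> x \<cdot> \<tau>)"
  by (induction t) auto

lemma subst_cong_vars: "(\<And>x. x \<in> vars_term t \<Longrightarrow> \<sigma> x = \<tau> x) \<Longrightarrow> t \<cdot> \<sigma> = t \<cdot> \<tau>"
  by (induction t) auto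

lemma vars_term_subst: "vars_term (t \<cdot> \<sigma>) = (\<Union>x\<in>vars_term t. vars_term (\<sigma> x))"
  by (induction t) auto

lemma finite_vars_term: "finite (vars_term t)"
  by (induction t) auto

lemma finite_vars_goal: "finite (vars_goal ss)"
  by (simp add: vars_goal_def finite_vars_term)

lemma goal_subst_cong_vars:
  "(\<And>x. x \<in> vars_goal ss \<Longrightarrow> \<sigma> x = \<tau> x) \<Longrightarrow> goal_subst ss \<sigma> = goal_subst ss \<tau>"
  by (auto simp: goal_subst_def vars_goal_def intro: subst_cong_vars)

lemma goal_subst_compose: "goal_subst (goal_subst ss \<sigma>) \<tau> = goal_subst ss (\<lambda>x. \<sigma> x \<cdot> \<tau>)"
  by (simp add: goal_subst_def subst_subst_compose)

lemma vars_goal_append [simp]: "vars_goal (ss @ ts) = vars_goal ss \<union> vars_goal ts"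
  by (simp add: vars_goal_def)

lemma goal_subst_append [simp]: "goal_subst (ss @ ts) \<sigma> = goal_subst ss \<sigma> @ goal_subst ts \<sigma>"
  by (simp add: goal_subst_def)

lemma goal_subst_take [simp]: "goal_subst (take n ss) \<sigma> = take n (goal_subst ss \<sigma>)"
  by (simp add: goal_subst_def take_map)

lemma goal_subst_drop [simp]: "goal_subst (drop n ss) \<sigma> = drop n (goal_subst ss \<sigma>)"
  by (simp add: goal_subst_def drop_map)

lemma is_subst_compose: "is_subst \<sigma> \<Longrightarrow> is_subst \<tau> \<Longrightarrow> is_subst (\<lambda>x. \<sigma> x \<cdot> \<tau>)"
  unfolding is_subst_def
  by (rule finite_subset[of _ "{x. \<sigma> x \<noteq> Var x} \<union> {x. \<tau> x \<noteq> Var x}"]) auto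

lemma poss_Fun: "poss (Fun f ts) = insert [] {i # p | i p. i < length ts \<and> p \<in> poss (ts ! i)}"
  by (auto simp: set_zip)

declare poss.simps(2) [simp del] poss_Fun [simp]

lemma Nil_in_poss [simp]: "[] \<in> poss t"
  by (cases t) auto

lemma poss_subst: "p \<in> poss s \<Longrightarrow> p \<in> poss (s \<cdot> \<theta>)"
  by (induction s p rule: subt_at.induct) auto

lemma subt_at_subst: "p \<in> poss s \<Longrightarrow> subt_at (s \<cdot> \<theta>) p = subt_at s p \<cdot> \<theta>"
  by (induction s p rule: subt_at.induct) auto

lemma replace_at_subst:
  "p \<in> poss s \<Longrightarrow> replace_at (s \<cdot> \<theta>) p (w \<cdot> \<theta>) = replace_at s p w \<cdot> \<theta>"
  by (induction s p rule: subt_at.induct) (auto simp: map_update)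

lemma poss_append: "q \<in> poss s \<Longrightarrow> p \<in> poss (subt_at s q) \<Longrightarrow> q @ p \<in> poss s"
  by (induction s q rule: subt_at.induct) auto

lemma subt_at_append: "q \<in> poss s \<Longrightarrow> subt_at s (q @ p) = subt_at (subt_at s q) p"
  by (induction s q rule: subt_at.induct) auto

lemma replace_at_append:
  "q \<in> poss s \<Longrightarrow> replace_at s (q @ p) w = replace_at s q (replace_at (subt_at s q) p w)"
  by (induction s q rule: subt_at.induct) auto

fun ctxt_of_term :: "('f, 'v) term \<Rightarrow> ('f, 'v) ctxt" where
  "ctxt_of_term (Var x) = CVar x"
| "ctxt_of_term (Fun f ts) = CFun f (map ctxt_of_term ts)"

lemma fill_ctxt_of_term [simp]: "fill (ctxt_of_term t) w = t"
  by (induction t) (auto simp: map_idI)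

lemma fill_hole_position:
  "has_hole c \<Longrightarrow> \<exists>q c'. q \<in> poss (fill c s) \<and> subt_at (fill c s) q = s \<and> has_hole c' \<and>
     (\<forall>w. replace_at (fill c s) q w = fill c' w)"
proof (induction c)
  case Hole
  show ?case by (rule exI[of _ "[]"], rule exI[of _ Hole]) simp
next
  case (CVar x)
  then show ?case by simp
next
  case (CFun f cs)
  then obtain i where i: "i < length cs" "has_hole (cs ! i)"
    by (auto simp: in_set_conv_nth)
  with CFun.IH obtain q c' where q: "q \<in> poss (fill (cs ! i) s)" "subt_at (fill (cs ! i) s) q = s"
    and c': "has_hole c'" "\<And>w. replace_at (fill (cs ! i) s) q w = fill c' w"
    by (meson nth_mem)
  \<comment> \<open>the siblings of \<open>cs ! i\<close> keep their copies of \<open>s\<close>, frozen into hole-free contexts\<close>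
  define d where "d = CFun f ((map (\<lambda>c. ctxt_of_term (fill c s)) cs)[i := c'])"
  have "has_hole d"
    using i c'(1) by (auto simp: d_def set_update_memI)
  moreover have "replace_at (fill (CFun f cs) s) (i # q) w = fill d w" for w
    using i c'(2) by (simp add: d_def map_update o_def)
  ultimately show ?case
    using i q by (intro exI[of _ "i # q"] exI[of _ d]) simp
qed

section \<open>Rewriting\<close>

lemma rstep_subst: "rstep r s t \<Longrightarrow> is_subst \<theta> \<Longrightarrow> rstep r (s \<cdot> \<theta>) (t \<cdot> \<theta>)"
  unfolding rstep_def rstep_at_def
  by (metis is_subst_compose poss_subst replace_at_subst subst_subst_compose subt_at_subst)

lemma rstep_ctxt:
  assumes "rstep r s t" "has_hole c"
  shows "\<exists>c'. has_hole c' \<and> rstep r (fill c s) (fill c' t)"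
proof -
  obtain p u v \<sigma> where step: "r = (u, [v])" "p \<in> poss s" "is_subst \<sigma>" "subt_at s p = u \<cdot> \<sigma>"
    "t = replace_at s p (v \<cdot> \<sigma>)"
    using assms(1) by (auto simp: rstep_def rstep_at_def)
  obtain q c' where q: "q \<in> poss (fill c s)" "subt_at (fill c s) q = s" "has_hole c'"
    "\<And>w. replace_at (fill c s) q w = fill c' w"
    using fill_hole_position[OF assms(2)] by blast
  have "rstep_at r (q @ p) (fill c s) (fill c' t)"
    unfolding rstep_at_def
    using step q by (auto simp: poss_append subt_at_append replace_at_append)
  then show ?thesis
    using q(3) by (auto simp: rstep_def)
qed

lemma rstep_ins:
  assumes "s' \<in> ins s" "rstep r s t"
  shows "\<exists>t' \<in> ins t. rstep r s' t'"
proof -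
  obtain c \<theta> where c: "has_hole c" and \<theta>: "is_subst \<theta>" and s': "s' = fill c (s \<cdot> \<theta>)"
    using assms(1) by (auto simp: ins_def is_instance_term_def)
  obtain c' where "has_hole c'" "rstep r s' (fill c' (t \<cdot> \<theta>))"
    using rstep_ctxt[OF rstep_subst[OF assms(2) \<theta>] c] s' by blast
  moreover have "fill c' (t \<cdot> \<theta>) \<in> ins t"
    using \<open>has_hole c'\<close> \<theta> by (auto simp: ins_def is_instance_term_def)
  ultimately show ?thesis
    by blast
qed

section \<open>Unification\<close>

type_synonym ('f, 'v) equations = "(('f, 'v) term \<times> ('f, 'v) term) list"

definition unifiers :: "('f, 'v) equations \<Rightarrow> ('v \<Rightarrow> ('f, 'v) term) set" where
  "unifiers E = {\<sigma>. \<forall>(s, t) \<in> set E. s \<cdot> \<sigma> = t \<cdot> \<sigma>}"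

definition is_imgu :: "('v \<Rightarrow> ('f, 'v) term) \<Rightarrow> ('f, 'v) equations \<Rightarrow> bool" where
  "is_imgu \<eta> E \<longleftrightarrow> is_subst \<eta> \<and> \<eta> \<in> unifiers E \<and> (\<forall>\<tau> \<in> unifiers E. \<forall>x. \<tau> x = \<eta> x \<cdot> \<tau>)"

definition eqs_vars :: "('f, 'v) equations \<Rightarrow> 'v set" where
  "eqs_vars E = (\<Union>(s, t) \<in> set E. vars_term s \<union> vars_term t)"

text \<open>The summand \<open>1\<close> matters: \<open>size (Var x) = 0\<close>, yet dropping a trivial equation
  \<open>x = x\<close> must decrease the measure.\<close>
definition eqs_size :: "('f, 'v) equations \<Rightarrow> nat" where
  "eqs_size E = (\<Sum>(s, t) \<leftarrow> E. size s + size t + 1)"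

definition eqs_less :: "(('f, 'v) equations \<times> ('f, 'v) equations) set" where
  "eqs_less = measures [card \<circ> eqs_vars, eqs_size]"

lemma unifiers_Nil [simp]: "unifiers [] = UNIV"
  by (simp add: unifiers_def)

lemma unifiers_Cons: "unifiers ((s, t) # E) = {\<sigma>. s \<cdot> \<sigma> = t \<cdot> \<sigma>} \<inter> unifiers E"
  by (auto simp: unifiers_def)

lemma unifiers_append: "unifiers (E @ F) = unifiers E \<inter> unifiers F"
  by (auto simp: unifiers_def)

lemma unifiers_zip:
  "length ss = length ts \<Longrightarrow> unifiers (zip ss ts) = {\<sigma>. map (\<lambda>s. s \<cdot> \<sigma>) ss = map (\<lambda>t. t \<cdot> \<sigma>) ts}"
  by (induction ss ts rule: list_induct2) (auto simp: unifiers_Cons)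

lemma unifiers_Fun:
  "length ss = length ts \<Longrightarrow> unifiers ((Fun f ss, Fun f ts) # E) = unifiers (zip ss ts @ E)"
  by (auto simp: unifiers_Cons unifiers_append unifiers_zip)

lemma finite_eqs_vars: "finite (eqs_vars E)"
  by (auto simp: eqs_vars_def finite_vars_term)

lemma eqs_vars_Cons: "eqs_vars ((s, t) # E) = vars_term s \<union> vars_term t \<union> eqs_vars E"
  by (auto simp: eqs_vars_def)

lemma wf_eqs_less: "wf eqs_less"
  by (simp add: eqs_less_def)

lemma eqs_less_Cons: "(E, e # E) \<in> eqs_less"
proof -
  obtain s t where e: "e = (s, t)"
    by fastforce
  have "card (eqs_vars E) \<le> card (eqs_vars (e # E))"
    by (rule card_mono) (auto simp: finite_eqs_vars finite_vars_term e eqs_vars_Cons)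
  then show ?thesis
    unfolding eqs_less_def by (intro measures_lesseq measures_less) (auto simp: e eqs_size_def)
qed

lemma eqs_less_decompose:
  assumes "length ss = length ts"
  shows "(zip ss ts @ E, (Fun f ss, Fun g ts) # E) \<in> eqs_less"
proof -
  have "eqs_vars (zip ss ts @ E) = eqs_vars ((Fun f ss, Fun g ts) # E)"
    using assms by (induction ss ts rule: list_induct2) (auto simp: eqs_vars_def)
  moreover have "eqs_size (zip ss ts @ E) < eqs_size ((Fun f ss, Fun g ts) # E)"
    using assms by (induction ss ts rule: list_induct2) (simp_all add: eqs_size_def)
  ultimately show ?thesis
    by (simp add: eqs_less_def measures_lesseq measures_less)
qed

lemma size_subst_var_le: "x \<in> vars_term t \<Longrightarrow> size (\<theta> x) \<le> size (t \<cdot> \<theta>)"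
proof (induction t)
  case (Var y)
  then show ?case by simp
next
  case (Fun f ts)
  then obtain t where "t \<in> set ts" "x \<in> vars_term t" by auto
  with Fun.IH have "size (\<theta> x) \<le> size (t \<cdot> \<theta>)" by blast
  also have "\<dots> \<le> size_list size (map (\<lambda>t. t \<cdot> \<theta>) ts)"
    using \<open>t \<in> set ts\<close> by (intro size_list_estimation') auto
  finally show ?case by simp
qed

lemma occurs_check:
  assumes "\<theta> x = u \<cdot> \<theta>" "u \<noteq> Var x"
  shows "x \<notin> vars_term u"
proof
  assume "x \<in> vars_term u"
  with assms(2) obtain f us u' where "u = Fun f us" "u' \<in> set us" "x \<in> vars_term u'"
    by (cases u) auto
  then have "size (\<theta> x) < size (u \<cdot> \<theta>)"
    using size_subst_var_le[of x u' \<theta>] size_list_estimation'[of "u' \<cdot> \<theta>" "map (\<lambda>t. t \<cdot> \<theta>) us"]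
    by fastforce
  with assms(1) show False by simp
qed

definition subst_eqs :: "('f, 'v) equations \<Rightarrow> ('v \<Rightarrow> ('f, 'v) term) \<Rightarrow> ('f, 'v) equations" where
  "subst_eqs E \<sigma> = map (\<lambda>(s, t). (s \<cdot> \<sigma>, t \<cdot> \<sigma>)) E"

lemma unifiers_subst_eqs: "\<tau> \<in> unifiers (subst_eqs E \<sigma>) \<longleftrightarrow> (\<lambda>x. \<sigma> x \<cdot> \<tau>) \<in> unifiers E"
  by (auto simp: unifiers_def subst_eqs_def subst_subst_compose)

lemma eqs_less_elim:
  assumes "(s, t) = (Var x, u) \<or> (s, t) = (u, Var x)" "x \<notin> vars_term u"
  shows "(subst_eqs E (Var(x := u)), (s, t) # E) \<in> eqs_less"
proof -
  have "eqs_vars (subst_eqs E (Var(x := u))) \<subseteq> eqs_vars E - {x} \<union> vars_term u"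
    by (auto simp: eqs_vars_def subst_eqs_def vars_term_subst split: if_splits)
  then have "eqs_vars (subst_eqs E (Var(x := u))) \<subset> eqs_vars ((s, t) # E)"
    using assms by (auto simp: eqs_vars_Cons)
  then show ?thesis
    unfolding eqs_less_def by (intro measures_less) (simp add: psubset_card_mono finite_eqs_vars)
qed

lemma is_imgu_cong: "unifiers E = unifiers F \<Longrightarrow> is_imgu \<eta> E \<longleftrightarrow> is_imgu \<eta> F"
  by (simp add: is_imgu_def)

lemma subst_elim_absorb: "\<tau> x = u \<cdot> \<tau> \<Longrightarrow> (\<lambda>y. (Var(x := u)) y \<cdot> \<tau>) = \<tau>"
  by auto

lemma is_imgu_Var_elim:
  assumes "x \<notin> vars_term u" and imgu: "is_imgu \<eta> (subst_eqs E (Var(x := u)))"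
  shows "is_imgu (\<lambda>y. (Var(x := u)) y \<cdot> \<eta>) ((Var x, u) # E)"
proof -
  let ?\<sigma> = "Var(x := u)"
  have "is_subst ?\<sigma>"
    unfolding is_subst_def by (rule finite_subset[of _ "{x}"]) auto
  then have "is_subst (\<lambda>y. ?\<sigma> y \<cdot> \<eta>)"
    using imgu is_subst_compose unfolding is_imgu_def by blast
  moreover have "u \<cdot> (\<lambda>y. ?\<sigma> y \<cdot> \<eta>) = u \<cdot> \<eta>"
    using assms(1) by (intro subst_cong_vars) auto
  then have "(\<lambda>y. ?\<sigma> y \<cdot> \<eta>) \<in> unifiers ((Var x, u) # E)"
    using imgu by (simp add: is_imgu_def unifiers_Cons unifiers_subst_eqs)
  moreover have "\<tau> y = ?\<sigma> y \<cdot> \<eta> \<cdot> \<tau>" if "\<tau> \<in> unifiers ((Var x, u) # E)" for \<tau> y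
  proof -
    have absorb: "(\<lambda>y. ?\<sigma> y \<cdot> \<tau>) = \<tau>"
      using that by (intro subst_elim_absorb) (simp add: unifiers_Cons)
    then have "\<tau> \<in> unifiers (subst_eqs E ?\<sigma>)"
      using that by (simp add: unifiers_Cons unifiers_subst_eqs)
    then have "(\<lambda>z. \<eta> z \<cdot> \<tau>) = \<tau>"
      using imgu by (auto simp: is_imgu_def)
    then show ?thesis
      using absorb by (metis subst_subst_compose)
  qed
  ultimately show ?thesis
    by (simp add: is_imgu_def)
qed

lemma unifiers_imp_ex_imgu: "\<theta> \<in> unifiers E \<Longrightarrow> \<exists>\<eta>. is_imgu \<eta> E"
proof (induction E arbitrary: \<theta> rule: wf_induct[OF wf_eqs_less])
  case (1 E)
  have IH: "\<exists>\<eta>. is_imgu \<eta> E'" if "(E', E) \<in> eqs_less" "\<theta>' \<in> unifiers E'" for E' \<theta>'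
    using 1(1) that by blast
  have reduce: "\<exists>\<eta>. is_imgu \<eta> E" if "(E', E) \<in> eqs_less" "unifiers E' = unifiers E" for E'
    using IH[OF that(1)] 1(2) is_imgu_cong[OF that(2)] that(2) by blast
  show ?case
  proof (cases E)
    case Nil
    then show ?thesis
      by (intro exI[of _ Var]) (simp add: is_imgu_def is_subst_def)
  next
    case (Cons e E0)
    obtain s t where E: "E = (s, t) # E0"
      using Cons by (cases e) auto
    have "s \<cdot> \<theta> = t \<cdot> \<theta>" "\<theta> \<in> unifiers E0"
      using 1(2) by (simp_all add: E unifiers_Cons)
    consider (trivial) "s = t"
      | (var) x u where "u \<noteq> Var x" "(s, t) = (Var x, u) \<or> (s, t) = (u, Var x)"
      | (decompose) f ss g ts where "s = Fun f ss" "t = Fun g ts"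
      by (cases s; cases t) auto
    then show ?thesis
    proof cases
      case trivial
      have "(E0, E) \<in> eqs_less"
        unfolding E by (rule eqs_less_Cons)
      moreover have "unifiers E0 = unifiers E"
        using trivial by (auto simp: E unifiers_Cons)
      ultimately show ?thesis
        by (rule reduce)
    next
      case (var x u)
      have unifiers_E: "unifiers E = unifiers ((Var x, u) # E0)"
        using var(2) by (auto simp: E unifiers_Cons)
      then have "\<theta> x = u \<cdot> \<theta>"
        using 1(2) by (simp add: unifiers_Cons)
      then have x: "x \<notin> vars_term u"
        using var(1) by (rule occurs_check)
      have "\<theta> \<in> unifiers (subst_eqs E0 (Var(x := u)))"
        using \<open>\<theta> \<in> unifiers E0\<close> subst_elim_absorb[OF \<open>\<theta> x = u \<cdot> \<theta>\<close>]
        by (simp add: unifiers_subst_eqs)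
      then obtain \<eta> where "is_imgu \<eta> (subst_eqs E0 (Var(x := u)))"
        using IH eqs_less_elim[OF var(2) x] unfolding E by blast
      then show ?thesis
        using is_imgu_Var_elim[OF x] is_imgu_cong[OF unifiers_E] by blast
    next
      case (decompose f ss g ts)
      then have "f = g" "length ss = length ts"
        using \<open>s \<cdot> \<theta> = t \<cdot> \<theta>\<close> by (auto dest: map_eq_imp_length_eq)
      then have "(zip ss ts @ E0, E) \<in> eqs_less" "unifiers (zip ss ts @ E0) = unifiers E"
        using decompose eqs_less_decompose[of ss ts E0 f g] by (simp_all add: E unifiers_Fun)
      then show ?thesis
        by (rule reduce)
    qed
  qed
qed

lemma ex_mgu_if_unifiable:
  assumes "s \<cdot> \<theta> = t \<cdot> \<theta>"
  shows "\<exists>\<eta>. is_mgu \<eta> s t"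
proof -
  obtain \<eta> where "is_imgu \<eta> [(s, t)]"
    using unifiers_imp_ex_imgu[of \<theta> "[(s, t)]"] assms by (auto simp: unifiers_Cons)
  then have "is_mgu \<eta> s t"
    unfolding is_imgu_def is_mgu_def by (auto simp: unifiers_Cons)
  then show ?thesis by blast
qed

section \<open>Narrowing\<close>

lemma ex_fresh_permutation:
  assumes "finite A" "finite B" "infinite (UNIV :: 'a set)"
  shows "\<exists>\<pi> :: 'a \<Rightarrow> 'a. bij \<pi> \<and> finite {x. \<pi> x \<noteq> x} \<and> \<pi> ` A \<inter> B = {}"
proof -
  have "infinite (UNIV - (A \<union> B))"
    using assms by (simp add: Diff_infinite_finite)
  then obtain A' where A': "finite A'" "card A' = card A" "A' \<subseteq> UNIV - (A \<union> B)"
    using infinite_arbitrarily_large by blast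
  then obtain f where f: "bij_betw f A A'"
    using finite_same_card_bij assms(1) by metis
  define \<pi> where "\<pi> x = (if x \<in> A then f x else if x \<in> A' then inv_into A f x else x)" for x
  have "\<pi> (\<pi> x) = x" for x
    using f A'(3) bij_betw_apply[OF f] bij_betw_apply[OF bij_betw_inv_into[OF f]]
    by (auto simp: \<pi>_def bij_betw_inv_into_left bij_betw_inv_into_right)
  then have "bij \<pi>"
    by (rule involuntory_imp_bij)
  moreover have "finite {x. \<pi> x \<noteq> x}"
    by (rule finite_subset[of _ "A \<union> A'"]) (auto simp: \<pi>_def assms(1) A'(1))
  moreover have "\<pi> ` A \<inter> B = {}"
    using bij_betw_imp_surj_on[OF f] A'(3) by (auto simp: \<pi>_def)
  ultimately show ?thesis
    by blast
qed

lemma ex_subst_merge: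
  assumes "finite V" "finite W" "V \<inter> W = {}"
  shows "\<exists>\<theta>. is_subst \<theta> \<and> (\<forall>x\<in>V. \<theta> x = \<sigma> x) \<and> (\<forall>x\<in>W. \<theta> x = \<tau> x)"
proof -
  define \<theta> where "\<theta> x = (if x \<in> V then \<sigma> x else if x \<in> W then \<tau> x else Var x)" for x
  have "{x. \<theta> x \<noteq> Var x} \<subseteq> V \<union> W"
    by (auto simp: \<theta>_def)
  then have "is_subst \<theta>"
    using assms(1,2) by (simp add: is_subst_def finite_subset)
  then show ?thesis
    using assms(3) by (intro exI[of _ \<theta>]) (auto simp: \<theta>_def)
qed

lemma ex_renaming_apart:
  assumes "finite A" "finite V" "infinite (UNIV :: 'v set)"
  shows "\<exists>\<rho> :: 'v \<Rightarrow> ('f, 'v) term. is_renaming \<rho> \<and> (\<Union>x\<in>A. vars_term (\<rho> x)) \<inter> V = {} \<and>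
    (\<forall>\<sigma> \<tau>. \<exists>\<theta>. is_subst \<theta> \<and> (\<forall>x\<in>V. \<theta> x = \<sigma> x) \<and> (\<forall>x\<in>A. \<rho> x \<cdot> \<theta> = \<tau> x))"
proof -
  obtain \<pi> where \<pi>: "bij \<pi>" "finite {x. \<pi> x \<noteq> x}" "\<pi> ` A \<inter> V = {}"
    using ex_fresh_permutation[OF assms] by blast
  define \<rho> :: "'v \<Rightarrow> ('f, 'v) term" where "\<rho> x = Var (\<pi> x)" for x
  have "is_renaming \<rho>"
    using \<pi>(1,2) by (auto simp: is_renaming_def is_subst_def \<rho>_def)
  moreover have "(\<Union>x\<in>A. vars_term (\<rho> x)) \<inter> V = {}"
    using \<pi>(3) by (auto simp: \<rho>_def)
  moreover have "\<exists>\<theta>. is_subst \<theta> \<and> (\<forall>x\<in>V. \<theta> x = \<sigma> x) \<and> (\<forall>x\<in>A. \<rho> x \<cdot> \<theta> = \<tau> x)" for \<sigma> \<tau>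
  proof -
    have disjoint: "V \<inter> \<pi> ` A = {}"
      using \<pi>(3) by blast
    obtain \<theta> where "is_subst \<theta>" "\<forall>x\<in>V. \<theta> x = \<sigma> x" "\<forall>y\<in>\<pi> ` A. \<theta> y = \<tau> (inv \<pi> y)"
      using ex_subst_merge[OF assms(2) finite_imageI[OF assms(1)] disjoint,
          where \<sigma> = \<sigma> and \<tau> = "\<lambda>y. \<tau> (inv \<pi> y)"]
      by blast
    then have "is_subst \<theta> \<and> (\<forall>x\<in>V. \<theta> x = \<sigma> x) \<and> (\<forall>x\<in>A. \<rho> x \<cdot> \<theta> = \<tau> x)"
      using inv_f_f[OF bij_is_inj[OF \<pi>(1)]] by (simp add: \<rho>_def)
    then show ?thesis
      by blast
  qed
  ultimately show ?thesis
    by blast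
qed

lemma nstep_at_frame:
  assumes "is_renaming \<rho>"
    and "(vars_term (u \<cdot> \<rho>) \<union> vars_goal (goal_subst vs \<rho>)) \<inter> vars_goal (pre @ ts @ post) = {}"
    and "is_mgu \<eta> (ts ! (i - 1)) (u \<cdot> \<rho>)" "1 \<le> i" "i \<le> length ts"
  shows "nstep_at (u, vs) (length pre + i) (pre @ ts @ post)
    (goal_subst pre \<eta> @ goal_subst (take (i - 1) ts @ goal_subst vs \<rho> @ drop i ts) \<eta> @ goal_subst post \<eta>)"
proof -
  have "(pre @ ts @ post) ! (length pre + i - 1) = ts ! (i - 1)"
    using assms(4,5) by (cases i) (simp_all add: nth_append)
  moreover have "take (length pre + i - 1) (pre @ ts @ post) = pre @ take (i - 1) ts"
    "drop (length pre + i) (pre @ ts @ post) = drop i ts @ post"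
    using assms(4,5) by simp_all
  ultimately show ?thesis
    unfolding nstep_at_def fst_conv snd_conv using assms
    by (intro conjI exI[of _ \<rho>] exI[of _ \<eta>]) simp_all
qed

lemma nstep_at_lifting:
  fixes ts :: "('f, 'v) goal"
  assumes inf: "infinite (UNIV :: 'v set)" and "finite V" "vars_goal ts \<subseteq> V" "is_subst \<delta>"
    and step: "nstep_at (u, vs) i (goal_subst ts \<delta>) us"
  shows "\<exists>\<rho>' \<eta>' \<delta>'. is_renaming \<rho>' \<and> (vars_term (u \<cdot> \<rho>') \<union> vars_goal (goal_subst vs \<rho>')) \<inter> V = {} \<and>
    is_mgu \<eta>' (ts ! (i - 1)) (u \<cdot> \<rho>') \<and> is_subst \<delta>' \<and>
    goal_subst (goal_subst (take (i - 1) ts @ goal_subst vs \<rho>' @ drop i ts) \<eta>') \<delta>' = us"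
proof -
  let ?ss = "goal_subst ts \<delta>"
  obtain \<rho> \<eta> :: "'v \<Rightarrow> ('f, 'v) term" where mgu: "is_mgu \<eta> (?ss ! (i - 1)) (u \<cdot> \<rho>)"
    and us: "us = goal_subst (take (i - 1) ?ss @ goal_subst vs \<rho> @ drop i ?ss) \<eta>"
    using step by (auto simp: nstep_at_def)
  have i: "1 \<le> i" "i \<le> length ts"
    using step by (auto simp: nstep_at_def goal_subst_def)
  define A where "A = vars_term u \<union> vars_goal vs"
  have "finite A"
    by (simp add: A_def finite_vars_term finite_vars_goal)
  obtain \<rho>' :: "'v \<Rightarrow> ('f, 'v) term" where "is_renaming \<rho>'"
    and apart: "(\<Union>x\<in>A. vars_term (\<rho>' x)) \<inter> V = {}"
    and merge: "\<forall>\<sigma> \<tau>. \<exists>\<theta>. is_subst \<theta> \<and> (\<forall>x\<in>V. \<theta> x = \<sigma> x) \<and> (\<forall>x\<in>A. \<rho>' x \<cdot> \<theta> = \<tau> x)"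
    using ex_renaming_apart[OF \<open>finite A\<close> assms(2) inf] by (elim exE conjE) (rule that)
  have fresh: "(vars_term (u \<cdot> \<rho>') \<union> vars_goal (goal_subst vs \<rho>')) \<inter> V = {}"
    using apart by (auto simp: A_def vars_term_subst vars_goal_def goal_subst_def)
  obtain \<theta> where "is_subst \<theta>" and \<theta>_goal: "\<forall>x\<in>V. \<theta> x = \<delta> x \<cdot> \<eta>"
    and \<theta>_rule: "\<forall>x\<in>A. \<rho>' x \<cdot> \<theta> = \<rho> x \<cdot> \<eta>"
    using merge[rule_format, of "\<lambda>x. \<delta> x \<cdot> \<eta>" "\<lambda>x. \<rho> x \<cdot> \<eta>"] by blast
  have ts_\<theta>: "goal_subst ts \<theta> = goal_subst ?ss \<eta>"
    unfolding goal_subst_compose using \<theta>_goal assms(3) by (intro goal_subst_cong_vars) auto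
  have rule_\<theta>: "t \<cdot> \<rho>' \<cdot> \<theta> = t \<cdot> \<rho> \<cdot> \<eta>" if "vars_term t \<subseteq> A" for t
    unfolding subst_subst_compose using that \<theta>_rule by (intro subst_cong_vars) auto
  have unifies: "ts ! (i - 1) \<cdot> \<theta> = u \<cdot> \<rho>' \<cdot> \<theta>"
    using mgu i ts_\<theta> rule_\<theta>[of u] by (auto simp: is_mgu_def goal_subst_def A_def)
  then obtain \<eta>' where mgu': "is_mgu \<eta>' (ts ! (i - 1)) (u \<cdot> \<rho>')"
    using ex_mgu_if_unifiable by blast
  then obtain \<delta>' where "is_subst \<delta>'" and \<theta>: "\<theta> = (\<lambda>x. \<eta>' x \<cdot> \<delta>')"
    using unifies \<open>is_subst \<theta>\<close> unfolding is_mgu_def by blast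
  let ?M = "take (i - 1) ts @ goal_subst vs \<rho>' @ drop i ts"
  have vs_\<theta>: "goal_subst (goal_subst vs \<rho>') \<theta> = goal_subst (goal_subst vs \<rho>) \<eta>"
    using rule_\<theta> by (auto simp: goal_subst_def A_def vars_goal_def)
  have "goal_subst (goal_subst ?M \<eta>') \<delta>' = goal_subst ?M \<theta>"
    by (simp only: goal_subst_compose \<theta>)
  also have "\<dots> = us"
    by (simp add: us ts_\<theta> vs_\<theta>)
  finally show ?thesis
    using \<open>is_renaming \<rho>'\<close> fresh mgu' \<open>is_subst \<delta>'\<close> by blast
qed

lemma nstep_mg:
  fixes r :: "('f, 'v) rule"
  assumes inf: "infinite (UNIV :: 'v set)" and "ss' \<in> mg ss" and "nstep r ss us"
  shows "\<exists>us' \<in> mg us. nstep r ss' us'"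
proof -
  obtain pre ts post \<delta> where ss': "ss' = pre @ ts @ post" and "is_subst \<delta>" and ss: "ss = goal_subst ts \<delta>"
    using assms(2) by (auto simp: mg_def is_instance_goal_def)
  obtain u vs i where r: "r = (u, vs)" and step: "nstep_at (u, vs) i (goal_subst ts \<delta>) us"
    using assms(3) by (cases r) (auto simp: ss nstep_def)
  then have i: "1 \<le> i" "i \<le> length ts"
    by (auto simp: nstep_at_def goal_subst_def)
  obtain \<rho>' \<eta>' \<delta>' where "is_renaming \<rho>'"
    and fresh: "(vars_term (u \<cdot> \<rho>') \<union> vars_goal (goal_subst vs \<rho>')) \<inter> vars_goal ss' = {}"
    and mgu: "is_mgu \<eta>' (ts ! (i - 1)) (u \<cdot> \<rho>')" and "is_subst \<delta>'"
    and us: "goal_subst (goal_subst (take (i - 1) ts @ goal_subst vs \<rho>' @ drop i ts) \<eta>') \<delta>' = us"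
    using nstep_at_lifting[OF inf finite_vars_goal _ \<open>is_subst \<delta>\<close> step, of ss'] by (auto simp: ss')
  with nstep_at_frame[OF \<open>is_renaming \<rho>'\<close> fresh[unfolded ss'] mgu i] show ?thesis
    unfolding mg_def is_instance_goal_def ss' r nstep_def by blast
qed

theorem lemma5:
  fixes r :: "('f, 'v :: countable) rule"
  assumes "infinite (UNIV :: 'v set)"
  shows "(\<forall>s s' t. s' \<in> ins s \<and> rstep r s t \<longrightarrow> (\<exists>t' \<in> ins t. rstep r s' t'))
       \<and> (\<forall>ss ss' ts. ss' \<in> mg ss \<and> nstep r ss ts \<longrightarrow> (\<exists>ts' \<in> mg ts. nstep r ss' ts'))"
  using rstep_ins nstep_mg[OF assms] by blast

end
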